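(* Let $C$ be a convex subset of a real topological vector space $X$. Call two faces $F,G$ of $C$ closure-equivalent if $\overline F=\overline G$, and for each closure-equivalence class $\mathcal K$ of faces of $C$ let $U_{\mathcal K}=\bigcup_{F\in\mathcal K}\operatorname{fri} F$. Then $C=\bigcup_{\mathcal K}U_{\mathcal K}$, the union being over all closure-equivalence classes, and $U_{\mathcal K}\cap U_{\mathcal K'}=\emptyset$ whenever $\mathcal K\neq\mathcal K'$.
   Context: For a convex set $C$, a convex subset $F\subseteq C$ is a face of $C$ if for every $x\in F$ and all $y,z\in C$ with $x\in(y,z)=\{(1-t)y+tz:t\in(0,1)\}$ we have $y,z\in F$; $F_{\min}(x,C)$ is the intersection of all faces of $C$ containing $x\in C$. The face relative interior of a convex set $D$ is $\operatorname{fri} D=\{x\in D: D\subseteq\overline{F_{\min}(x,D)}\}$. *)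

theory Defs
  imports "HOL-Analysis.Analysis"
begin

text \<open>Real topological vector space: additive topological group with jointly
continuous scalar multiplication (no separation axiom assumed).\<close>
class topological_real_vector = real_vector + topological_ab_group_add +
  assumes tendsto_scaleR_Pair:
    "LIM p (nhds c \<times>\<^sub>F nhds a). fst p *\<^sub>R snd p :> nhds (c *\<^sub>R a)"

definition Fmin :: "'a::real_vector \<Rightarrow> 'a set \<Rightarrow> 'a set" where
  "Fmin x C = \<Inter>{F. F face_of C \<and> x \<in> F}"

definition fri :: "'a::{real_vector,topological_space} set \<Rightarrow> 'a set" where
  "fri D = {x \<in> D. D \<subseteq> closure (Fmin x D)}"

definition closure_equiv_classes :: "'a::{real_vector,topological_space} set \<Rightarrow> 'a set set set" where
  "closure_equiv_classes C =
     {{G. G face_of C \<and> closure G = closure F} | F. F face_of C}"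

definition Ucls :: "'a::{real_vector,topological_space} set set \<Rightarrow> 'a set" where
  "Ucls K = (\<Union>F\<in>K. fri F)"

end

theory Submission
  imports Defs
begin

text \<open>Every point x of C lies in the face relative interior of its minimal face
Fmin(x,C). Conversely, if x lies in fri F for a face F of C, then minimal faces
are inherited by faces, so Fmin(x,C) \<subseteq> F \<subseteq> closure Fmin(x,C) and hence
closure F = closure Fmin(x,C). Thus the closure-equivalence class of any face
whose fri contains x is determined by x alone.\<close>

lemma Fmin_face_of:
  assumes "convex C" "x \<in> C"
  shows "Fmin x C face_of C"
  unfolding Fmin_def using assms face_of_refl by (intro face_of_Inter) auto

lemma mem_Fmin: "x \<in> Fmin x C"
  unfolding Fmin_def by blast

lemma Fmin_subset_face:
  assumes "F face_of C" "x \<in> F"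
  shows "Fmin x C \<subseteq> F"
  using assms unfolding Fmin_def by blast

lemma Fmin_face_of_eq:
  assumes "F face_of C" "x \<in> F"
  shows "Fmin x F = Fmin x C"
proof
  show "Fmin x C \<subseteq> Fmin x F"
    unfolding Fmin_def using assms face_of_trans by blast
  have "Fmin x F \<subseteq> H" if "H face_of C" "x \<in> H" for H
  proof -
    have "(H \<inter> F) face_of F"
      using face_of_subset[OF face_of_Int[OF that(1) assms(1)]] face_of_imp_subset[OF assms(1)]
      by blast
    then show ?thesis
      using that assms unfolding Fmin_def by blast
  qed
  then show "Fmin x F \<subseteq> Fmin x C"
    unfolding Fmin_def by blast
qed

lemma fri_subset: "fri D \<subseteq> D"
  unfolding fri_def by blast

lemma mem_fri_Fmin:
  assumes "convex C" "x \<in> C"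
  shows "x \<in> fri (Fmin x C)"
proof -
  have "Fmin x (Fmin x C) = Fmin x C"
    using Fmin_face_of_eq Fmin_face_of mem_Fmin assms by blast
  then show ?thesis
    unfolding fri_def using mem_Fmin closure_subset by blast
qed

lemma closure_eq_closure_Fmin_if_mem_fri:
  assumes "F face_of C" "x \<in> fri F"
  shows "closure F = closure (Fmin x C)"
proof -
  have x: "x \<in> F" "F \<subseteq> closure (Fmin x F)"
    using assms(2) unfolding fri_def by auto
  have "closure (Fmin x C) \<subseteq> closure F"
    using Fmin_subset_face[OF assms(1) x(1)] by (rule closure_mono)
  moreover have "closure F \<subseteq> closure (Fmin x C)"
    using x(2) Fmin_face_of_eq[OF assms(1) x(1)] by (metis closure_closure closure_mono)
  ultimately show ?thesis
    by blast
qed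

lemma Ucls_subset:
  assumes "K \<in> closure_equiv_classes C"
  shows "Ucls K \<subseteq> C"
  using assms fri_subset face_of_imp_subset
  unfolding Ucls_def closure_equiv_classes_def by blast

lemma closure_equiv_class_eq_if_mem_Ucls:
  assumes "K \<in> closure_equiv_classes C" "x \<in> Ucls K"
  shows "K = {G. G face_of C \<and> closure G = closure (Fmin x C)}"
proof -
  obtain F0 where F0: "K = {G. G face_of C \<and> closure G = closure F0}"
    using assms(1) unfolding closure_equiv_classes_def by blast
  then obtain F where "F face_of C" "closure F = closure F0" "x \<in> fri F"
    using assms(2) unfolding Ucls_def by blast
  then show ?thesis
    using F0 closure_eq_closure_Fmin_if_mem_fri by metis
qed

lemma mem_Ucls_closure_equiv_class_Fmin:
  assumes "convex C" "x \<in> C"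
  shows "{G. G face_of C \<and> closure G = closure (Fmin x C)} \<in> closure_equiv_classes C"
    and "x \<in> Ucls {G. G face_of C \<and> closure G = closure (Fmin x C)}"
  using Fmin_face_of[OF assms] mem_fri_Fmin[OF assms]
  unfolding closure_equiv_classes_def Ucls_def by blast+

theorem theorem5p3:
  fixes C :: "'a::topological_real_vector set"
  assumes "convex C"
  shows "C = (\<Union>K\<in>closure_equiv_classes C. Ucls K) \<and>
         (\<forall>K\<in>closure_equiv_classes C. \<forall>K'\<in>closure_equiv_classes C.
           K \<noteq> K' \<longrightarrow> Ucls K \<inter> Ucls K' = {})"
proof (intro conjI ballI impI)
  show "C = (\<Union>K\<in>closure_equiv_classes C. Ucls K)"
    using mem_Ucls_closure_equiv_class_Fmin[OF assms] Ucls_subset by blast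
next
  fix K K' assume "K \<in> closure_equiv_classes C" "K' \<in> closure_equiv_classes C" "K \<noteq> K'"
  then show "Ucls K \<inter> Ucls K' = {}"
    using closure_equiv_class_eq_if_mem_Ucls by blast
qed

end
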